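(* Let $\mathcal{A}\in\hat{\mathcal{T}}_7$ with $c_{15}^7=c_{25}^7=0$. Then $\mathcal{A}$ is isomorphic to a unique algebra structure $\mathcal{A}'\in\hat{\mathcal{T}}_7$ whose structure constants $d_{ij}^k$ satisfy $d_{15}^7=d_{25}^7=0$ and $d_{46}^7=1$.
   Context: Over $\mathbb{C}$, basis $e_1,\dots,e_7$, $e_ie_j=\sum_kc_{ij}^ke_k$. $\hat{\mathcal{T}}_7$ is the family of anticommutative algebra structures with $c_{ij}^k=0$ whenever $k\le\max\{i,j\}$, $e_ie_{i+1}=e_{i+2}$ for $1\le i\le5$, $c_{13}^4=c_{14}^5=c_{15}^6=c_{24}^5=c_{25}^6=c_{14}^6=c_{24}^6=c_{13}^6=0$, $c_{35}^6=1$ and $c_{13}^5c_{46}^7\ne0$, other constants arbitrary subject to anticommutativity. *)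

theory Defs
  imports Complex_Main
begin

text \<open>An algebra structure on the basis e_1..e_7 is given by its structure constants
  c i j k (the coefficient of e_k in e_i e_j), indices in {1..7}; outside this
  range the function is required to vanish so that structures correspond
  one-to-one to such functions.\<close>

type_synonym sconst = "nat \<Rightarrow> nat \<Rightarrow> nat \<Rightarrow> complex"

definition T7hat :: "sconst \<Rightarrow> bool" where
  "T7hat c \<longleftrightarrow>
     (\<forall>i j k. c i j k \<noteq> 0 \<longrightarrow> i \<in> {1..7} \<and> j \<in> {1..7} \<and> k \<in> {1..7}) \<and>
     (\<forall>i j k. c i i k = 0 \<and> c j i k = - c i j k) \<and>
     (\<forall>i j k. k \<le> max i j \<longrightarrow> c i j k = 0) \<and>
     (\<forall>i\<in>{1..5}. \<forall>k. c i (i+1) k = (if k = i + 2 then 1 else 0)) \<and>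
     c 1 3 4 = 0 \<and> c 1 4 5 = 0 \<and> c 1 5 6 = 0 \<and> c 2 4 5 = 0 \<and>
     c 2 5 6 = 0 \<and> c 1 4 6 = 0 \<and> c 2 4 6 = 0 \<and> c 1 3 6 = 0 \<and>
     c 3 5 6 = 1 \<and> c 1 3 5 * c 4 6 7 \<noteq> 0"

text \<open>Isomorphism: an invertible 7x7 matrix P (phi(e_i) = sum_a P a i e'_a)
  with phi(e_i e_j) = phi(e_i) phi(e_j) for all basis vectors.\<close>

definition alg_iso :: "sconst \<Rightarrow> sconst \<Rightarrow> bool" where
  "alg_iso c d \<longleftrightarrow>
     (\<exists>P Q :: nat \<Rightarrow> nat \<Rightarrow> complex.
        (\<forall>i\<in>{1..7}. \<forall>j\<in>{1..7}.
           (\<Sum>k=1..7. P i k * Q k j) = (if i = j then 1 else 0) \<and>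
           (\<Sum>k=1..7. Q i k * P k j) = (if i = j then 1 else 0)) \<and>
        (\<forall>i\<in>{1..7}. \<forall>j\<in>{1..7}. \<forall>a\<in>{1..7}.
           (\<Sum>k=1..7. c i j k * P a k) =
           (\<Sum>b=1..7. \<Sum>e=1..7. P b i * P e j * d b e a)))"

end

theory Submission
  imports Defs
begin

(* Rescaling the basis by e_k -> a^(w_k) e_k with weights w = (1,0,1,1,2,3,5) preserves every
   normalised product of the family (w_{i+2} = w_i + w_{i+1} and w_6 = w_3 + w_5) and multiplies
   c_46^7 by a, so a suitable a makes it 1. Conversely, comparing coefficients in
   phi(e_i e_j) = phi(e_i) phi(e_j) shows that an isomorphism between two structures of the
   family with c_15^7 = c_25^7 = 0 is triangular with diagonal P_kk = P_11^(w_k). It therefore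
   acts on the free structure constants exactly as the rescaling by a = P_11, and d_46^7 = 1
   pins down a. *)

(* Keeps 1 from being rewritten to Suc 0, so that the rules below, stated with numerals,
   apply to the expanded sums. *)
declare One_nat_def [simp del]

lemma sum_1_7_expand:
  fixes f :: "nat \<Rightarrow> 'a::comm_monoid_add"
  shows "(\<Sum>k=1..7. f k) = f 1 + f 2 + f 3 + f 4 + f 5 + f 6 + f 7"
  by (simp add: numeral_eq_Suc add.assoc One_nat_def)

lemma T7hat_constants:
  assumes "T7hat c"
  shows T7hat_out_of_range: "\<not> (i \<in> {1..7} \<and> j \<in> {1..7} \<and> k \<in> {1..7}) \<Longrightarrow> c i j k = 0"
    and T7hat_antisym: "c j i k = - c i j k"
    and T7hat_diag: "c i i k = 0"
    and T7hat_below: "k \<le> i \<or> k \<le> j \<Longrightarrow> c i j k = 0"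
    and T7hat_chain: "c 1 2 k = (if k = 3 then 1 else 0)" "c 2 3 k = (if k = 4 then 1 else 0)"
      "c 3 4 k = (if k = 5 then 1 else 0)" "c 4 5 k = (if k = 6 then 1 else 0)"
      "c 5 6 k = (if k = 7 then 1 else 0)"
    and T7hat_fixed: "c 1 3 4 = 0" "c 1 4 5 = 0" "c 1 5 6 = 0" "c 2 4 5 = 0" "c 2 5 6 = 0"
      "c 1 4 6 = 0" "c 2 4 6 = 0" "c 1 3 6 = 0" "c 3 5 6 = 1"
    and T7hat_135_nonzero: "c 1 3 5 \<noteq> 0"
    and T7hat_467_nonzero: "c 4 6 7 \<noteq> 0"
proof -
  have range: "\<forall>i j k. c i j k \<noteq> 0 \<longrightarrow> i \<in> {1..7} \<and> j \<in> {1..7} \<and> k \<in> {1..7}"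
    and alt: "\<forall>i j k. c i i k = 0 \<and> c j i k = - c i j k"
    and below: "\<forall>i j k. k \<le> max i j \<longrightarrow> c i j k = 0"
    and chain: "\<forall>i\<in>{1..5}. \<forall>k. c i (i+1) k = (if k = i + 2 then 1 else 0)"
    and fixed: "c 1 3 4 = 0" "c 1 4 5 = 0" "c 1 5 6 = 0" "c 2 4 5 = 0" "c 2 5 6 = 0"
      "c 1 4 6 = 0" "c 2 4 6 = 0" "c 1 3 6 = 0" "c 3 5 6 = 1"
    and nonzero: "c 1 3 5 * c 4 6 7 \<noteq> 0"
    using assms unfolding T7hat_def by blast+
  show "\<not> (i \<in> {1..7} \<and> j \<in> {1..7} \<and> k \<in> {1..7}) \<Longrightarrow> c i j k = 0"
    using range by blast
  show "c j i k = - c i j k" "c i i k = 0" using alt by blast+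
  show "k \<le> i \<or> k \<le> j \<Longrightarrow> c i j k = 0" using below by (auto simp: le_max_iff_disj)
  show "c 1 2 k = (if k = 3 then 1 else 0)" "c 2 3 k = (if k = 4 then 1 else 0)"
      "c 3 4 k = (if k = 5 then 1 else 0)" "c 4 5 k = (if k = 6 then 1 else 0)"
      "c 5 6 k = (if k = 7 then 1 else 0)"
    using chain[rule_format, of 1 k] chain[rule_format, of 2 k] chain[rule_format, of 3 k]
      chain[rule_format, of 4 k] chain[rule_format, of 5 k]
    by simp_all
  show "c 1 3 4 = 0" "c 1 4 5 = 0" "c 1 5 6 = 0" "c 2 4 5 = 0" "c 2 5 6 = 0"
      "c 1 4 6 = 0" "c 2 4 6 = 0" "c 1 3 6 = 0" "c 3 5 6 = 1"
    by (fact fixed)+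
  show "c 1 3 5 \<noteq> 0" "c 4 6 7 \<noteq> 0" using nonzero by simp_all
qed

(* Antisymmetry oriented for simp. It is kept out of T7hat_simps because under an inconsistent
   hypothesis such as 6 < 2 the simplifier would loop on it. *)
lemma T7hat_antisym_lt: "T7hat c \<Longrightarrow> j < i \<Longrightarrow> c i j k = - c j i k"
  by (rule T7hat_antisym)

lemmas T7hat_simps = T7hat_diag T7hat_below T7hat_chain T7hat_fixed

lemma T7hat_eqI:
  assumes c: "T7hat c" and d: "T7hat d"
    and free: "c 1 3 5 = d 1 3 5" "c 1 3 7 = d 1 3 7" "c 1 4 7 = d 1 4 7" "c 1 5 7 = d 1 5 7"
      "c 1 6 7 = d 1 6 7" "c 2 4 7 = d 2 4 7" "c 2 5 7 = d 2 5 7" "c 2 6 7 = d 2 6 7"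
      "c 3 5 7 = d 3 5 7" "c 3 6 7 = d 3 6 7" "c 4 6 7 = d 4 6 7"
  shows "c = d"
proof -
  have upper: "c i j k = d i j k" if "1 \<le> i" "i < j" "j \<le> 7" "1 \<le> k" "k \<le> 7" for i j k
  proof -
    have "i = 1 \<or> i = 2 \<or> i = 3 \<or> i = 4 \<or> i = 5 \<or> i = 6"
      and "j = 2 \<or> j = 3 \<or> j = 4 \<or> j = 5 \<or> j = 6 \<or> j = 7"
      and "k = 1 \<or> k = 2 \<or> k = 3 \<or> k = 4 \<or> k = 5 \<or> k = 6 \<or> k = 7"
      using that by presburger+
    then show ?thesis
      using \<open>i < j\<close> by (elim disjE) (simp_all add: T7hat_simps[OF c] T7hat_simps[OF d] free)
  qed
  have "c i j k = d i j k" for i j k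
  proof (cases "i \<in> {1..7} \<and> j \<in> {1..7} \<and> k \<in> {1..7}")
    case False
    then show ?thesis using T7hat_out_of_range[OF c] T7hat_out_of_range[OF d] by simp
  next
    case True
    then show ?thesis
      using upper[of i j k] upper[of j i k] T7hat_antisym[OF c, of j i k]
        T7hat_antisym[OF d, of j i k] T7hat_diag[OF c] T7hat_diag[OF d]
      by (cases i j rule: linorder_cases) auto
  qed
  then show ?thesis by blast
qed

definition weight :: "nat \<Rightarrow> nat" where
  "weight k = (if k \<in> {1, 3, 4} then 1 else if k = 5 then 2 else if k = 6 then 3
     else if k = 7 then 5 else 0)"

(* The structure constants in the basis e_k' = a^(-weight k) e_k. *)
definition rescale :: "complex \<Rightarrow> sconst \<Rightarrow> sconst" where
  "rescale a c i j k = c i j k * a ^ weight k / a ^ (weight i + weight j)"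

lemma rescale_eq_self:
  "a \<noteq> 0 \<Longrightarrow> weight k = weight i + weight j \<Longrightarrow> rescale a c i j k = c i j k"
  by (simp add: rescale_def)

lemma rescale_467: "a \<noteq> 0 \<Longrightarrow> rescale a c 4 6 7 = c 4 6 7 * a"
  by (simp add: rescale_def weight_def power_numeral_reduce)

lemma rescale_eqI:
  "a \<noteq> 0 \<Longrightarrow> d i j k * (a ^ weight i * a ^ weight j) = c i j k * a ^ weight k \<Longrightarrow>
    d i j k = rescale a c i j k"
  by (simp add: rescale_def field_simps power_add)

lemma T7hat_rescale:
  assumes c: "T7hat c" and a: "a \<noteq> 0"
  shows "T7hat (rescale a c)"
proof -
  have chain: "rescale a c i (i+1) k = (if k = i + 2 then 1 else 0)" if "i \<in> {1..5}" for i k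
  proof -
    have "weight (i + 2) = weight i + weight (i + 1)"
      using that by (auto simp: weight_def)
    moreover have "c i (i+1) k = (if k = i + 2 then 1 else 0)"
      using c that unfolding T7hat_def by blast
    ultimately show ?thesis
      using rescale_eq_self[OF a, of "i + 2" i "i + 1" c] by (auto simp: rescale_def)
  qed
  have range: "rescale a c i j k \<noteq> 0 \<Longrightarrow> i \<in> {1..7} \<and> j \<in> {1..7} \<and> k \<in> {1..7}" for i j k
    using T7hat_out_of_range[OF c, of i j k] by (auto simp: rescale_def)
  have alt: "rescale a c i i k = 0 \<and> rescale a c j i k = - rescale a c i j k" for i j k
    using T7hat_diag[OF c] T7hat_antisym[OF c, of i j k] by (simp add: rescale_def add.commute)
  have below: "k \<le> max i j \<Longrightarrow> rescale a c i j k = 0" for i j k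
    using T7hat_below[OF c, of k i j] by (simp add: rescale_def le_max_iff_disj)
  have fixed: "rescale a c 1 3 4 = 0" "rescale a c 1 4 5 = 0" "rescale a c 1 5 6 = 0"
    "rescale a c 2 4 5 = 0" "rescale a c 2 5 6 = 0" "rescale a c 1 4 6 = 0"
    "rescale a c 2 4 6 = 0" "rescale a c 1 3 6 = 0" "rescale a c 3 5 6 = 1"
    using T7hat_fixed[OF c] a by (simp_all add: rescale_def weight_def)
  have "rescale a c 1 3 5 * rescale a c 4 6 7 \<noteq> 0"
    using T7hat_135_nonzero[OF c] T7hat_467_nonzero[OF c] a
    by (simp add: rescale_eq_self weight_def rescale_467)
  then show ?thesis
    unfolding T7hat_def using range alt below chain fixed by blast
qed

lemma alg_iso_diagonal:
  fixes \<mu> :: "nat \<Rightarrow> complex"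
  assumes nonzero: "\<And>k. k \<in> {1..7} \<Longrightarrow> \<mu> k \<noteq> 0"
    and d: "\<And>i j k. i \<in> {1..7} \<Longrightarrow> j \<in> {1..7} \<Longrightarrow> k \<in> {1..7} \<Longrightarrow>
      d i j k * (\<mu> i * \<mu> j) = c i j k * \<mu> k"
  shows "alg_iso c d"
  unfolding alg_iso_def
proof (intro exI conjI ballI)
  let ?P = "\<lambda>x y. if x = y then \<mu> y else 0"
  let ?Q = "\<lambda>x y. if x = y then inverse (\<mu> y) else 0"
  have if_times: "(if p then x else 0) * y = (if p then x * y else 0)"
    and times_if: "y * (if p then x else 0) = (if p then y * x else 0)" for p and x y :: complex
    by simp_all
  fix i j assume ij: "i \<in> {1..7::nat}" "j \<in> {1..7::nat}"
  show "(\<Sum>k=1..7. ?P i k * ?Q k j) = (if i = j then 1 else 0)"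
    and "(\<Sum>k=1..7. ?Q i k * ?P k j) = (if i = j then 1 else 0)"
    using ij nonzero by (simp_all add: if_times times_if sum.delta sum.delta' cong: if_cong)
  fix m assume m: "m \<in> {1..7::nat}"
  have "(\<Sum>b=1..7. \<Sum>e=1..7. ?P b i * ?P e j * d b e m) = \<mu> i * \<mu> j * d i j m"
    using ij by (simp add: if_times times_if sum.delta sum.delta' cong: if_cong)
  also have "\<dots> = c i j m * \<mu> m"
    using d[OF ij m] by (simp add: mult.commute)
  finally show "(\<Sum>k=1..7. c i j k * ?P m k) =
      (\<Sum>b=1..7. \<Sum>e=1..7. ?P b i * ?P e j * d b e m)"
    using m by (simp add: times_if sum.delta' cong: if_cong)
qed

lemma alg_iso_rescale: "a \<noteq> 0 \<Longrightarrow> alg_iso c (rescale a c)"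
  by (rule alg_iso_diagonal[where \<mu> = "\<lambda>k. a ^ weight k"]) (simp_all add: rescale_def power_add)

locale T7hat_iso =
  fixes c d :: sconst and P Q :: "nat \<Rightarrow> nat \<Rightarrow> complex"
  assumes T7hat_c: "T7hat c" and T7hat_d: "T7hat d"
    and c_157: "c 1 5 7 = 0" and c_257: "c 2 5 7 = 0"
    and d_157: "d 1 5 7 = 0" and d_257: "d 2 5 7 = 0"
    and left_inverse: "\<And>i j. i \<in> {1..7} \<Longrightarrow> j \<in> {1..7} \<Longrightarrow>
      (\<Sum>k=1..7. Q i k * P k j) = (if i = j then 1 else 0)"
    and hom: "\<And>i j m. i \<in> {1..7} \<Longrightarrow> j \<in> {1..7} \<Longrightarrow> m \<in> {1..7} \<Longrightarrow>
      (\<Sum>k=1..7. c i j k * P m k) = (\<Sum>b=1..7. \<Sum>e=1..7. P b i * P e j * d b e m)"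
begin

lemmas struct_simps [simp] =
  T7hat_simps[OF T7hat_c] T7hat_simps[OF T7hat_d]
  T7hat_antisym_lt[OF T7hat_c] T7hat_antisym_lt[OF T7hat_d] c_157 c_257 d_157 d_257
  T7hat_135_nonzero[OF T7hat_c] T7hat_135_nonzero[OF T7hat_d]

lemma P_col3 [simp]: "P 1 3 = 0" "P 2 3 = 0"
  using hom[of 1 2 1] hom[of 1 2 2] by (simp_all add: sum_1_7_expand)

lemma P_col4 [simp]: "P 1 4 = 0" "P 2 4 = 0" "P 3 4 = 0"
  using hom[of 2 3 1] hom[of 2 3 2] hom[of 2 3 3] by (simp_all add: sum_1_7_expand)

lemma P_col5 [simp]: "P 1 5 = 0" "P 2 5 = 0" "P 3 5 = 0" "P 4 5 = 0"
  using hom[of 3 4 1] hom[of 3 4 2] hom[of 3 4 3] hom[of 3 4 4] by (simp_all add: sum_1_7_expand)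

lemma P_col6 [simp]: "P 1 6 = 0" "P 2 6 = 0" "P 3 6 = 0" "P 4 6 = 0" "P 5 6 = 0"
  using hom[of 4 5 1] hom[of 4 5 2] hom[of 4 5 3] hom[of 4 5 4] hom[of 4 5 5]
  by (simp_all add: sum_1_7_expand)

lemma P_col7 [simp]: "P 1 7 = 0" "P 2 7 = 0" "P 3 7 = 0" "P 4 7 = 0" "P 5 7 = 0" "P 6 7 = 0"
  using hom[of 5 6 1] hom[of 5 6 2] hom[of 5 6 3] hom[of 5 6 4] hom[of 5 6 5] hom[of 5 6 6]
  by (simp_all add: sum_1_7_expand)

lemma P_77_nonzero [simp]: "P 7 7 \<noteq> 0"
  using left_inverse[of 7 7] by (auto simp: sum_1_7_expand)

lemma P_diag_products:
  "P 7 7 = P 5 5 * P 6 6" "P 6 6 = P 4 4 * P 5 5" "P 5 5 = P 3 3 * P 4 4"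
  "P 4 4 = P 2 2 * P 3 3" "P 3 3 = P 1 1 * P 2 2 - P 1 2 * P 2 1"
  using hom[of 5 6 7] hom[of 4 5 6] hom[of 3 4 5] hom[of 2 3 4] hom[of 1 2 3]
  by (simp_all add: sum_1_7_expand)

lemma P_diag_nonzero [simp]: "P 2 2 \<noteq> 0" "P 3 3 \<noteq> 0" "P 4 4 \<noteq> 0" "P 5 5 \<noteq> 0" "P 6 6 \<noteq> 0"
  using P_77_nonzero by (simp_all add: P_diag_products(1-4))

lemma P_lower_4 [simp]:
  "P 2 1 = 0" "P 3 1 = 0" "P 3 2 = 0" "P 4 1 = 0" "P 4 2 = 0" "P 4 3 = 0"
  using hom[of 1 3 4] hom[of 1 4 5] hom[of 2 4 5] hom[of 1 5 6] hom[of 2 5 6] hom[of 1 2 4]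
  by (simp_all add: sum_1_7_expand)

lemma P_diag_powers:
  "P 2 2 = 1" "P 3 3 = P 1 1" "P 4 4 = P 1 1" "P 5 5 = P 1 1 ^ 2" "P 6 6 = P 1 1 ^ 3"
  "P 7 7 = P 1 1 ^ 5"
proof -
  have "P 6 6 = P 3 3 * P 5 5"
    using hom[of 3 5 6] by (simp add: sum_1_7_expand)
  then have "P 4 4 = P 3 3"
    using P_diag_products(2) by simp
  then show "P 2 2 = 1"
    using P_diag_products(4) P_diag_nonzero(2) by (metis mult_cancel_right1)
  then show "P 3 3 = P 1 1" "P 4 4 = P 1 1"
    using \<open>P 4 4 = P 3 3\<close> P_diag_products(5) by simp_all
  then show "P 5 5 = P 1 1 ^ 2" "P 6 6 = P 1 1 ^ 3" "P 7 7 = P 1 1 ^ 5"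
    using P_diag_products(1-3) by (simp_all add: power_numeral_reduce)
qed

lemma P_lower_7 [simp]:
  "P 5 1 = 0" "P 5 2 = 0" "P 5 3 = 0" "P 6 3 = 0" "P 6 5 = 0" "P 5 4 = 0" "P 1 2 = 0"
  "P 6 1 = 0" "P 6 2 = 0" "P 6 4 = 0" "P 7 6 = 0" "P 7 5 = 0"
  using hom[of 1 4 6] hom[of 2 4 6] hom[of 1 2 5] hom[of 1 2 6] hom[of 1 3 6] hom[of 3 4 6]
    hom[of 2 3 5] hom[of 1 5 7] hom[of 2 5 7] hom[of 2 3 6] hom[of 4 5 7] hom[of 3 4 7]
  by (simp_all add: sum_1_7_expand)

lemma free_constants:
  "d 1 3 5 * (P 1 1 * P 3 3) = c 1 3 5 * P 5 5"
  "d 1 3 7 * (P 1 1 * P 3 3) = c 1 3 7 * P 7 7"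
  "d 1 4 7 * (P 1 1 * P 4 4) = c 1 4 7 * P 7 7"
  "d 1 6 7 * (P 1 1 * P 6 6) = c 1 6 7 * P 7 7"
  "d 2 4 7 * (P 2 2 * P 4 4) = c 2 4 7 * P 7 7"
  "d 2 6 7 * (P 2 2 * P 6 6) = c 2 6 7 * P 7 7"
  "d 3 5 7 * (P 3 3 * P 5 5) = c 3 5 7 * P 7 7"
  "d 3 6 7 * (P 3 3 * P 6 6) = c 3 6 7 * P 7 7"
  "d 4 6 7 * (P 4 4 * P 6 6) = c 4 6 7 * P 7 7"
  using hom[of 1 3 5] hom[of 1 3 7] hom[of 1 4 7] hom[of 1 6 7] hom[of 2 4 7] hom[of 2 6 7]
    hom[of 3 5 7] hom[of 3 6 7] hom[of 4 6 7]
  by (simp_all add: sum_1_7_expand)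

lemma P_11_nonzero: "P 1 1 \<noteq> 0"
  using P_diag_nonzero(2) by (simp add: P_diag_powers)

lemma d_eq_rescale: "d = rescale (P 1 1) c"
proof (rule T7hat_eqI[OF T7hat_d T7hat_rescale[OF T7hat_c P_11_nonzero]])
  show "d 1 3 5 = rescale (P 1 1) c 1 3 5" "d 1 3 7 = rescale (P 1 1) c 1 3 7"
    "d 1 4 7 = rescale (P 1 1) c 1 4 7" "d 1 6 7 = rescale (P 1 1) c 1 6 7"
    "d 2 4 7 = rescale (P 1 1) c 2 4 7" "d 2 6 7 = rescale (P 1 1) c 2 6 7"
    "d 3 5 7 = rescale (P 1 1) c 3 5 7" "d 3 6 7 = rescale (P 1 1) c 3 6 7"
    "d 4 6 7 = rescale (P 1 1) c 4 6 7"
    using free_constants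
    by (intro rescale_eqI[OF P_11_nonzero]; simp add: weight_def P_diag_powers)+
  show "d 1 5 7 = rescale (P 1 1) c 1 5 7" "d 2 5 7 = rescale (P 1 1) c 2 5 7"
    by (simp_all add: rescale_def)
qed

end

lemma T7hat_alg_iso_imp_rescale:
  assumes "T7hat c" "T7hat d" "c 1 5 7 = 0" "c 2 5 7 = 0" "d 1 5 7 = 0" "d 2 5 7 = 0"
    and "alg_iso c d"
  shows "\<exists>a. a \<noteq> 0 \<and> d = rescale a c"
proof -
  obtain P Q where
    "\<forall>i\<in>{1..7}. \<forall>j\<in>{1..7}. (\<Sum>k=1..7. Q i k * P k j) = (if i = j then 1 else 0)"
    and "\<forall>i\<in>{1..7}. \<forall>j\<in>{1..7}. \<forall>m\<in>{1..7}.
      (\<Sum>k=1..7. c i j k * P m k) = (\<Sum>b=1..7. \<Sum>e=1..7. P b i * P e j * d b e m)"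
    using \<open>alg_iso c d\<close> unfolding alg_iso_def by blast
  then interpret T7hat_iso c d P Q
    using assms by unfold_locales blast+
  show ?thesis
    using P_11_nonzero d_eq_rescale by blast
qed

theorem mainTheorem19:
  fixes c :: sconst
  assumes "T7hat c" and "c 1 5 7 = 0" and "c 2 5 7 = 0"
  shows "\<exists>!d. T7hat d \<and> d 1 5 7 = 0 \<and> d 2 5 7 = 0 \<and> d 4 6 7 = 1 \<and> alg_iso c d"
proof (rule ex1I)
  define a where "a = inverse (c 4 6 7)"
  have c467: "c 4 6 7 \<noteq> 0"
    using T7hat_467_nonzero[OF assms(1)] .
  then have a: "a \<noteq> 0"
    by (simp add: a_def)
  have "rescale a c 1 5 7 = 0" "rescale a c 2 5 7 = 0"
    using assms(2,3) by (simp_all add: rescale_def)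
  moreover have "rescale a c 4 6 7 = 1"
    using rescale_467[OF a] c467 by (simp add: a_def)
  ultimately show "T7hat (rescale a c) \<and> rescale a c 1 5 7 = 0 \<and> rescale a c 2 5 7 = 0 \<and>
      rescale a c 4 6 7 = 1 \<and> alg_iso c (rescale a c)"
    using T7hat_rescale[OF assms(1) a] alg_iso_rescale[OF a] by blast
  fix d
  assume d: "T7hat d \<and> d 1 5 7 = 0 \<and> d 2 5 7 = 0 \<and> d 4 6 7 = 1 \<and> alg_iso c d"
  then obtain b where b: "b \<noteq> 0" "d = rescale b c"
    using T7hat_alg_iso_imp_rescale assms by blast
  then have "c 4 6 7 * b = 1"
    using d rescale_467 by metis
  then have "b = a"
    using c467 by (simp add: a_def field_simps)
  then show "d = rescale a c"
    using b by simp
qed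

end
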